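(* Let $G$ be a torsion-free group, $\mathbb{F}$ a field, $\alpha$ a zero divisor in $\mathbb{F}[G]$ with $|supp(\alpha)|=4$ and $|S_\alpha|=10$, and $\beta$ a mate of $\alpha$. Then one of the following holds: (i) there exist distinct non-trivial $x,y\in G$ and $\alpha'\in\mathbb{F}[G]$ with $supp(\alpha')=\{1,x,x^{-1},y\}$, $\alpha'\beta=0$ and $Z(\alpha,\beta)\cong Z(\alpha',\beta)$; (ii) there exist distinct non-trivial $x,y\in G$ and $\alpha'\in\mathbb{F}[G]$ with $supp(\alpha')=\{1,x,y,xy\}$, $\alpha'\beta=0$ and $Z(\alpha,\beta)\cong Z(\alpha',\beta)$. Furthermore, if $\mathbb{F}=\mathbb{F}_2$, then case (i) occurs.
   Context: $supp(\gamma)=\{x\in G:\gamma_x\ne0\}$; $S_\alpha=\{h^{-1}h':h\ne h',\ h,h'\in supp(\alpha)\}$. A mate of $\alpha$ is a non-zero $\beta$ with $\alpha\beta=0$ of minimal support size among all non-zero $\beta'$ with $\alpha\beta'=0$. For $\gamma\delta=0$, $Z(\gamma,\delta)$ is the multigraph with vertex set $supp(\delta)$ whose edges are the sets $\{(h,h',g,g'),(h',h,g',g)\}$ with $h,h'\in supp(\gamma)$, $g,g'\in supp(\delta)$, $g\ne g'$, $hg=h'g'$, each joining $g$ and $g'$. Isomorphism $\cong$ means a pair of bijections on vertices and on edges preserving adjacency and non-adjacency of vertices and of edges. *)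

theory Defs
  imports "HOL-Algebra.Group"
begin

text \<open>Elements of the group ring F[G] are represented as finitely supported
functions from the carrier of G to the field (zero outside the carrier).\<close>

definition supp :: "('a \<Rightarrow> 'f::zero) \<Rightarrow> 'a set" where
  "supp \<gamma> = {x. \<gamma> x \<noteq> 0}"

definition grp_ring :: "('a, 'b) monoid_scheme \<Rightarrow> ('a \<Rightarrow> 'f::field) set" where
  "grp_ring G = {\<gamma>. supp \<gamma> \<subseteq> carrier G \<and> finite (supp \<gamma>)}"

definition gr_mult :: "('a, 'b) monoid_scheme \<Rightarrow> ('a \<Rightarrow> 'f::field) \<Rightarrow> ('a \<Rightarrow> 'f) \<Rightarrow> 'a \<Rightarrow> 'f" where
  "gr_mult G \<gamma> \<delta> x =
     (\<Sum>h\<in>supp \<gamma>. \<Sum>g\<in>supp \<delta>. if h \<otimes>\<^bsub>G\<^esub> g = x then \<gamma> h * \<delta> g else 0)"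

definition torsion_free :: "('a, 'b) monoid_scheme \<Rightarrow> bool" where
  "torsion_free G \<longleftrightarrow>
     (\<forall>x\<in>carrier G. x \<noteq> \<one>\<^bsub>G\<^esub> \<longrightarrow> (\<forall>n::nat. n > 0 \<longrightarrow> x [^]\<^bsub>G\<^esub> n \<noteq> \<one>\<^bsub>G\<^esub>))"

definition S_set :: "('a, 'b) monoid_scheme \<Rightarrow> ('a \<Rightarrow> 'f::zero) \<Rightarrow> 'a set" where
  "S_set G \<alpha> = {inv\<^bsub>G\<^esub> h \<otimes>\<^bsub>G\<^esub> h' | h h'. h \<noteq> h' \<and> h \<in> supp \<alpha> \<and> h' \<in> supp \<alpha>}"

definition is_mate :: "('a, 'b) monoid_scheme \<Rightarrow> ('a \<Rightarrow> 'f::field) \<Rightarrow> ('a \<Rightarrow> 'f) \<Rightarrow> bool" where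
  "is_mate G \<alpha> \<beta> \<longleftrightarrow>
     \<beta> \<in> grp_ring G \<and> \<beta> \<noteq> (\<lambda>_. 0) \<and> gr_mult G \<alpha> \<beta> = (\<lambda>_. 0) \<and>
     (\<forall>\<beta>'\<in>grp_ring G. \<beta>' \<noteq> (\<lambda>_. 0) \<and> gr_mult G \<alpha> \<beta>' = (\<lambda>_. 0)
          \<longrightarrow> card (supp \<beta>) \<le> card (supp \<beta>'))"

definition Z_verts :: "('a \<Rightarrow> 'f::zero) \<Rightarrow> 'a set" where
  "Z_verts \<delta> = supp \<delta>"

definition Z_edges :: "('a, 'b) monoid_scheme \<Rightarrow> ('a \<Rightarrow> 'f::zero) \<Rightarrow> ('a \<Rightarrow> 'f) \<Rightarrow> ('a \<times> 'a \<times> 'a \<times> 'a) set set" where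
  "Z_edges G \<gamma> \<delta> = {{(h, h', g, g'), (h', h, g', g)} | h h' g g'.
      h \<in> supp \<gamma> \<and> h' \<in> supp \<gamma> \<and> g \<in> supp \<delta> \<and> g' \<in> supp \<delta> \<and> g \<noteq> g' \<and>
      h \<otimes>\<^bsub>G\<^esub> g = h' \<otimes>\<^bsub>G\<^esub> g'}"

definition Z_ends :: "('a \<times> 'a \<times> 'a \<times> 'a) set \<Rightarrow> 'a set" where
  "Z_ends e = {g. \<exists>h h' g'. (h, h', g, g') \<in> e}"

definition Z_adjv :: "('a \<times> 'a \<times> 'a \<times> 'a) set set \<Rightarrow> 'a \<Rightarrow> 'a \<Rightarrow> bool" where
  "Z_adjv E u v \<longleftrightarrow> (\<exists>e\<in>E. u \<in> Z_ends e \<and> v \<in> Z_ends e \<and> u \<noteq> v)"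

definition Z_adje :: "('a \<times> 'a \<times> 'a \<times> 'a) set \<Rightarrow> ('a \<times> 'a \<times> 'a \<times> 'a) set \<Rightarrow> bool" where
  "Z_adje e f \<longleftrightarrow> e \<noteq> f \<and> Z_ends e \<inter> Z_ends f \<noteq> {}"

definition Z_iso :: "('a, 'b) monoid_scheme \<Rightarrow> ('a \<Rightarrow> 'f::zero) \<Rightarrow> ('a \<Rightarrow> 'f) \<Rightarrow>
                     ('a \<Rightarrow> 'f) \<Rightarrow> ('a \<Rightarrow> 'f) \<Rightarrow> bool" where
  "Z_iso G \<gamma> \<delta> \<gamma>' \<delta>' \<longleftrightarrow>
     (\<exists>\<phi> \<psi>. bij_betw \<phi> (Z_verts \<delta>) (Z_verts \<delta>') \<and>
            bij_betw \<psi> (Z_edges G \<gamma> \<delta>) (Z_edges G \<gamma>' \<delta>') \<and>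
            (\<forall>u\<in>Z_verts \<delta>. \<forall>v\<in>Z_verts \<delta>.
               Z_adjv (Z_edges G \<gamma> \<delta>) u v \<longleftrightarrow> Z_adjv (Z_edges G \<gamma>' \<delta>') (\<phi> u) (\<phi> v)) \<and>
            (\<forall>e\<in>Z_edges G \<gamma> \<delta>. \<forall>f\<in>Z_edges G \<gamma> \<delta>.
               Z_adje e f \<longleftrightarrow> Z_adje (\<psi> e) (\<psi> f)))"

end

(*
  Since |S_alpha| = 10 is smaller than the 12 ordered pairs of distinct elements of
  supp alpha, two pairs have the same quotient h^-1 h'. Torsion-freeness rules out
  the coincidence (h^-1 h')^-1 = h^-1 h', so after naming supp alpha = {a, b, c, d}
  either a^-1 b = c^-1 a or a^-1 b = c^-1 d. Left translation by a^-1 preserves both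
  the equation alpha beta = 0 and the graph Z(alpha, beta) (only the first two
  coordinates of each edge change), and turns the support into {1, x, x^-1, y} resp.
  {1, x, y, xy}. Over F_2 the second relation is impossible: then
  alpha = (a + c)(1 + t) with t = a^-1 b, and a finitely supported function on a
  torsion-free group invariant under a non-trivial translation vanishes, so beta = 0.
*)

theory Submission
  imports Defs "HOL-Algebra.Multiplicative_Group"
begin

context group begin

lemma l_cancel_iff [simp]:
  "\<lbrakk>a \<in> carrier G; x \<in> carrier G; y \<in> carrier G\<rbrakk> \<Longrightarrow> a \<otimes> x = a \<otimes> y \<longleftrightarrow> x = y"
  by (metis Units_eq Units_l_cancel)

lemma mult_inv_cancel_left [simp]:
  "\<lbrakk>a \<in> carrier G; x \<in> carrier G\<rbrakk> \<Longrightarrow> a \<otimes> (inv a \<otimes> x) = x"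
  by (simp add: m_assoc [symmetric])

lemma inv_mult_cancel_left [simp]:
  "\<lbrakk>a \<in> carrier G; x \<in> carrier G\<rbrakk> \<Longrightarrow> inv a \<otimes> (a \<otimes> x) = x"
  by (simp add: m_assoc [symmetric])

lemma inv_mult_eq_one_iff [simp]:
  "\<lbrakk>a \<in> carrier G; x \<in> carrier G\<rbrakk> \<Longrightarrow> inv a \<otimes> x = \<one> \<longleftrightarrow> x = a"
  by (metis inv_solve_left' r_one one_closed)

lemma torsion_free_pow_inj:
  assumes "torsion_free G" and "x \<in> carrier G" and "x \<noteq> \<one>"
  shows "inj (\<lambda>n::nat. x [^] n)"
proof -
  have "\<not> (\<exists>n::nat. n \<noteq> 0 \<and> x [^] n = \<one>)"
    using assms unfolding torsion_free_def by blast
  then show ?thesis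
    using finite_cyclic_subgroup infinite_cyclic_subgroup \<open>x \<in> carrier G\<close>
    by (auto intro: injI)
qed

lemma torsion_free_square_eq_one:
  assumes "torsion_free G" and "x \<in> carrier G" and "x \<otimes> x = \<one>"
  shows "x = \<one>"
  using assms unfolding torsion_free_def
  by (metis nat_pow_Suc nat_pow_0 l_one zero_less_numeral numeral_2_eq_2)

end

lemma supp_subset_carrier: "\<gamma> \<in> grp_ring G \<Longrightarrow> supp \<gamma> \<subseteq> carrier G"
  and finite_supp: "\<gamma> \<in> grp_ring G \<Longrightarrow> finite (supp \<gamma>)"
  by (auto simp: grp_ring_def)

lemma (in group) gr_mult_apply:
  assumes "\<gamma> \<in> grp_ring G" and "\<delta> \<in> grp_ring G" and "z \<in> carrier G"
  shows "gr_mult G \<gamma> \<delta> z = (\<Sum>h\<in>supp \<gamma>. \<gamma> h * \<delta> (inv h \<otimes> z))"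
  unfolding gr_mult_def
proof (rule sum.cong [OF refl])
  fix h assume h: "h \<in> supp \<gamma>"
  have "h \<in> carrier G" and "supp \<delta> \<subseteq> carrier G"
    using h assms(1,2) supp_subset_carrier by blast+
  then have "(\<Sum>g\<in>supp \<delta>. if h \<otimes> g = z then \<gamma> h * \<delta> g else 0)
      = (\<Sum>g\<in>supp \<delta>. if g = inv h \<otimes> z then \<gamma> h * \<delta> g else 0)"
    using assms(3) by (intro sum.cong) (auto simp: inv_solve_left)
  also have "\<dots> = \<gamma> h * \<delta> (inv h \<otimes> z)"
    using finite_supp [OF assms(2)] by (simp add: sum.delta) (simp add: supp_def)
  finally show "(\<Sum>g\<in>supp \<delta>. if h \<otimes> g = z then \<gamma> h * \<delta> g else 0) = \<gamma> h * \<delta> (inv h \<otimes> z)" .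
qed

lemma (in group) gr_mult_outside_carrier:
  assumes "\<gamma> \<in> grp_ring G" and "\<delta> \<in> grp_ring G" and "z \<notin> carrier G"
  shows "gr_mult G \<gamma> \<delta> z = 0"
  using assms supp_subset_carrier unfolding gr_mult_def
  by (intro sum.neutral ballI) (auto dest!: subsetD)

definition left_translate :: "('a, 'b) monoid_scheme \<Rightarrow> 'a \<Rightarrow> ('a \<Rightarrow> 'f::zero) \<Rightarrow> 'a \<Rightarrow> 'f" where
  "left_translate G a \<gamma> z = (if z \<in> carrier G then \<gamma> (a \<otimes>\<^bsub>G\<^esub> z) else 0)"

context group begin

lemma supp_left_translate:
  assumes "a \<in> carrier G" and "supp \<gamma> \<subseteq> carrier G"
  shows "supp (left_translate G a \<gamma>) = (\<lambda>h. inv a \<otimes> h) ` supp \<gamma>"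
proof (intro equalityI subsetI)
  fix z assume "z \<in> supp (left_translate G a \<gamma>)"
  then have "z \<in> carrier G" and "a \<otimes> z \<in> supp \<gamma>"
    by (auto simp: supp_def left_translate_def split: if_splits)
  then show "z \<in> (\<lambda>h. inv a \<otimes> h) ` supp \<gamma>"
    using assms(1) by (auto intro: rev_image_eqI [of "a \<otimes> z"])
next
  fix z assume "z \<in> (\<lambda>h. inv a \<otimes> h) ` supp \<gamma>"
  then show "z \<in> supp (left_translate G a \<gamma>)"
    using assms by (auto simp: supp_def left_translate_def)
qed

lemma left_translate_in_grp_ring:
  assumes "a \<in> carrier G" and "\<gamma> \<in> grp_ring G"
  shows "left_translate G a \<gamma> \<in> grp_ring G"
proof -
  have "supp \<gamma> \<subseteq> carrier G" and "finite (supp \<gamma>)"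
    using assms(2) by (rule supp_subset_carrier, rule finite_supp)
  then show ?thesis
    using assms(1) by (auto simp: grp_ring_def supp_left_translate)
qed

lemma gr_mult_left_translate:
  assumes a: "a \<in> carrier G" and \<gamma>: "\<gamma> \<in> grp_ring G" and \<delta>: "\<delta> \<in> grp_ring G"
    and z: "z \<in> carrier G"
  shows "gr_mult G (left_translate G a \<gamma>) \<delta> z = gr_mult G \<gamma> \<delta> (a \<otimes> z)"
proof -
  have sub: "supp \<gamma> \<subseteq> carrier G" using \<gamma> by (rule supp_subset_carrier)
  have "inj_on (\<lambda>h. inv a \<otimes> h) (supp \<gamma>)"
    using a sub by (intro inj_onI) (metis inv_closed l_cancel_iff subsetD)
  then have "gr_mult G (left_translate G a \<gamma>) \<delta> z
      = (\<Sum>h\<in>supp \<gamma>. left_translate G a \<gamma> (inv a \<otimes> h) * \<delta> (inv (inv a \<otimes> h) \<otimes> z))"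
    using gr_mult_apply [OF left_translate_in_grp_ring [OF a \<gamma>] \<delta> z]
    by (simp add: supp_left_translate [OF a sub] sum.reindex)
  also have "\<dots> = (\<Sum>h\<in>supp \<gamma>. \<gamma> h * \<delta> (inv h \<otimes> (a \<otimes> z)))"
    using a z sub by (intro sum.cong) (auto simp: left_translate_def inv_mult_group m_assoc)
  also have "\<dots> = gr_mult G \<gamma> \<delta> (a \<otimes> z)"
    using gr_mult_apply [OF \<gamma> \<delta>] a z by simp
  finally show ?thesis .
qed

lemma left_translate_annihilates:
  assumes "a \<in> carrier G" and "\<gamma> \<in> grp_ring G" and "\<delta> \<in> grp_ring G"
    and "gr_mult G \<gamma> \<delta> = (\<lambda>_. 0)"
  shows "gr_mult G (left_translate G a \<gamma>) \<delta> = (\<lambda>_. 0)"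
proof
  fix z show "gr_mult G (left_translate G a \<gamma>) \<delta> z = 0"
  proof (cases "z \<in> carrier G")
    case True
    then show ?thesis using assms by (simp add: gr_mult_left_translate)
  next
    case False
    then show ?thesis
      using assms gr_mult_outside_carrier left_translate_in_grp_ring by blast
  qed
qed

end

lemma Z_iso_by_edge_map:
  assumes "inj_on \<psi> (Z_edges G \<gamma> \<delta>)" and "Z_edges G \<gamma>' \<delta> = \<psi> ` Z_edges G \<gamma> \<delta>"
    and "\<And>e. e \<in> Z_edges G \<gamma> \<delta> \<Longrightarrow> Z_ends (\<psi> e) = Z_ends e"
  shows "Z_iso G \<gamma> \<delta> \<gamma>' \<delta>"
  unfolding Z_iso_def
proof (intro exI conjI ballI)
  show "bij_betw id (Z_verts \<delta>) (Z_verts \<delta>)" by simp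
  show "bij_betw \<psi> (Z_edges G \<gamma> \<delta>) (Z_edges G \<gamma>' \<delta>)"
    using assms(1,2) by (simp add: bij_betw_def)
  show "Z_adjv (Z_edges G \<gamma> \<delta>) u v \<longleftrightarrow> Z_adjv (Z_edges G \<gamma>' \<delta>) (id u) (id v)" for u v
    using assms(2,3) by (auto simp: Z_adjv_def)
  show "Z_adje e f \<longleftrightarrow> Z_adje (\<psi> e) (\<psi> f)" if "e \<in> Z_edges G \<gamma> \<delta>" "f \<in> Z_edges G \<gamma> \<delta>" for e f
    using that assms(1,3) by (auto simp: Z_adje_def inj_on_def)
qed

context group begin

lemma Z_edges_left_translate:
  assumes a: "a \<in> carrier G" and \<gamma>: "supp \<gamma> \<subseteq> carrier G" and \<delta>: "supp \<delta> \<subseteq> carrier G"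
  defines "\<tau> \<equiv> \<lambda>(h, h', g, g'). (inv a \<otimes> h, inv a \<otimes> h', g, g')"
  shows "Z_edges G (left_translate G a \<gamma>) \<delta> = (\<lambda>e. \<tau> ` e) ` Z_edges G \<gamma> \<delta>"
proof (intro equalityI subsetI)
  fix e assume "e \<in> Z_edges G (left_translate G a \<gamma>) \<delta>"
  then obtain k k' g g' where e: "e = {(k, k', g, g'), (k', k, g', g)}"
    and k: "k \<in> (\<lambda>h. inv a \<otimes> h) ` supp \<gamma>" "k' \<in> (\<lambda>h. inv a \<otimes> h) ` supp \<gamma>"
    and g: "g \<in> supp \<delta>" "g' \<in> supp \<delta>" "g \<noteq> g'" and eq: "k \<otimes> g = k' \<otimes> g'"
    unfolding Z_edges_def supp_left_translate [OF a \<gamma>] by blast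
  from k obtain h h' where h: "h \<in> supp \<gamma>" "h' \<in> supp \<gamma>"
    and kh: "k = inv a \<otimes> h" "k' = inv a \<otimes> h'" by blast
  have "h \<in> carrier G" "h' \<in> carrier G" "g \<in> carrier G" "g' \<in> carrier G"
    using h g \<gamma> \<delta> by auto
  then have "h \<otimes> g = h' \<otimes> g'"
    using eq a unfolding kh by (simp add: m_assoc)
  then have "{(h, h', g, g'), (h', h, g', g)} \<in> Z_edges G \<gamma> \<delta>"
    using h g unfolding Z_edges_def by blast
  moreover have "e = \<tau> ` {(h, h', g, g'), (h', h, g', g)}"
    unfolding e kh \<tau>_def by simp
  ultimately show "e \<in> (\<lambda>e. \<tau> ` e) ` Z_edges G \<gamma> \<delta>" by blast
next
  fix e assume "e \<in> (\<lambda>e. \<tau> ` e) ` Z_edges G \<gamma> \<delta>"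
  then obtain h h' g g' where e: "e = \<tau> ` {(h, h', g, g'), (h', h, g', g)}"
    and h: "h \<in> supp \<gamma>" "h' \<in> supp \<gamma>"
    and g: "g \<in> supp \<delta>" "g' \<in> supp \<delta>" "g \<noteq> g'" and eq: "h \<otimes> g = h' \<otimes> g'"
    unfolding Z_edges_def by blast
  have "h \<in> carrier G" "h' \<in> carrier G" "g \<in> carrier G" "g' \<in> carrier G"
    using h g \<gamma> \<delta> by auto
  then have "(inv a \<otimes> h) \<otimes> g = (inv a \<otimes> h') \<otimes> g'"
    using eq a by (simp add: m_assoc)
  moreover have "inv a \<otimes> h \<in> (\<lambda>h. inv a \<otimes> h) ` supp \<gamma>"
    and "inv a \<otimes> h' \<in> (\<lambda>h. inv a \<otimes> h) ` supp \<gamma>"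
    using h by auto
  moreover have "e = {(inv a \<otimes> h, inv a \<otimes> h', g, g'), (inv a \<otimes> h', inv a \<otimes> h, g', g)}"
    unfolding e \<tau>_def by simp
  ultimately show "e \<in> Z_edges G (left_translate G a \<gamma>) \<delta>"
    using g unfolding Z_edges_def supp_left_translate [OF a \<gamma>] by blast
qed

lemma Z_iso_left_translate:
  assumes a: "a \<in> carrier G" and \<gamma>: "supp \<gamma> \<subseteq> carrier G" and \<delta>: "supp \<delta> \<subseteq> carrier G"
  shows "Z_iso G \<gamma> \<delta> (left_translate G a \<gamma>) \<delta>"
proof (rule Z_iso_by_edge_map)
  let ?\<tau> = "\<lambda>(h, h', g, g'). (inv a \<otimes> h, inv a \<otimes> h', g, g')"
  show "Z_edges G (left_translate G a \<gamma>) \<delta> = (\<lambda>e. ?\<tau> ` e) ` Z_edges G \<gamma> \<delta>"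
    using assms by (rule Z_edges_left_translate)
  have "inj_on ?\<tau> (carrier G \<times> carrier G \<times> UNIV)"
    using a by (auto simp: inj_on_def)
  moreover have "\<Union> (Z_edges G \<gamma> \<delta>) \<subseteq> carrier G \<times> carrier G \<times> UNIV"
    using \<gamma> by (auto simp: Z_edges_def)
  ultimately have "inj_on ?\<tau> (\<Union> (Z_edges G \<gamma> \<delta>))"
    by (rule inj_on_subset)
  then show "inj_on (\<lambda>e. ?\<tau> ` e) (Z_edges G \<gamma> \<delta>)"
    by (rule inj_on_image)
  show "Z_ends (?\<tau> ` e) = Z_ends e" for e
    unfolding Z_ends_def by force
qed

end

lemma card_4_complete:
  assumes "card A = 4" and "{a, b, c} \<subseteq> A" and "distinct [a, b, c]"
  shows "\<exists>d. A = {a, b, c, d} \<and> distinct [a, b, c, d]"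
proof -
  have "finite A" using assms(1) by (intro card_ge_0_finite) simp
  then have "card (A - {a, b, c}) = 1"
    using assms by (simp add: card_Diff_subset)
  then obtain d where "A - {a, b, c} = {d}" by (rule card_1_singletonE)
  then have "A = {a, b, c, d}" and "d \<notin> {a, b, c}" using assms(2) by auto
  then show ?thesis using assms(3) by auto
qed

context group begin

lemma torsion_free_quotient_neq_inverse:
  assumes tf: "torsion_free G" and "x \<in> carrier G" "y \<in> carrier G" "x \<noteq> y"
  shows "inv x \<otimes> y \<noteq> inv y \<otimes> x"
proof
  assume "inv x \<otimes> y = inv y \<otimes> x"
  then have "(inv x \<otimes> y) \<otimes> (inv x \<otimes> y) = \<one>"
    using assms(2,3) by (metis inv_closed inv_mult_group inv_inv m_closed r_inv)
  moreover have "inv x \<otimes> y \<in> carrier G" using assms(2,3) by simp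
  ultimately have "inv x \<otimes> y = \<one>"
    by (intro torsion_free_square_eq_one [OF tf, of "inv x \<otimes> y"])
  then show False using assms(2-4) by simp
qed

lemma quotient_collision:
  assumes "finite A"
    and "card {inv h \<otimes> h' | h h'. h \<noteq> h' \<and> h \<in> A \<and> h' \<in> A} < card A * (card A - 1)"
    and "A \<subseteq> carrier G"
  shows "\<exists>h1 h2 h3 h4. h1 \<in> A \<and> h2 \<in> A \<and> h3 \<in> A \<and> h4 \<in> A \<and> h1 \<noteq> h2 \<and> h3 \<noteq> h4 \<and>
           h1 \<noteq> h3 \<and> h2 \<noteq> h4 \<and> inv h1 \<otimes> h2 = inv h3 \<otimes> h4"
proof -
  define P where "P = A \<times> A - (\<lambda>h. (h, h)) ` A"
  have "card ((\<lambda>h. (h, h)) ` A) = card A" by (simp add: card_image inj_on_def)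
  moreover have "(\<lambda>h. (h, h)) ` A \<subseteq> A \<times> A" by auto
  ultimately have "card P = card A * (card A - 1)"
    using assms(1) by (simp add: P_def card_Diff_subset card_cartesian_product diff_mult_distrib2)
  moreover have "{inv h \<otimes> h' | h h'. h \<noteq> h' \<and> h \<in> A \<and> h' \<in> A} = (\<lambda>(h, h'). inv h \<otimes> h') ` P"
    unfolding P_def by auto
  ultimately have "\<not> inj_on (\<lambda>(h, h'). inv h \<otimes> h') P"
    using assms(2) card_image by fastforce
  then obtain h1 h2 h3 h4 where h: "(h1, h2) \<in> P" "(h3, h4) \<in> P" "(h1, h2) \<noteq> (h3, h4)"
    and eq: "inv h1 \<otimes> h2 = inv h3 \<otimes> h4"
    unfolding inj_on_def by auto
  have c: "h1 \<in> carrier G" "h2 \<in> carrier G" "h3 \<in> carrier G" "h4 \<in> carrier G"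
    using h assms(3) unfolding P_def by auto
  have "h1 \<noteq> h3" using eq h(3) c by auto
  moreover have "h2 \<noteq> h4"
  proof
    assume "h2 = h4"
    then have "inv h1 = inv h3" using eq c by simp
    then show False using \<open>h1 \<noteq> h3\<close> c by (metis inv_inv)
  qed
  ultimately show ?thesis using h eq unfolding P_def by blast
qed

lemma four_element_quotient_relation:
  assumes tf: "torsion_free G" and A: "A \<subseteq> carrier G" "card A = 4"
    and S: "card {inv h \<otimes> h' | h h'. h \<noteq> h' \<and> h \<in> A \<and> h' \<in> A} = 10"
  shows "\<exists>a b c d. A = {a, b, c, d} \<and> distinct [a, b, c, d] \<and>
           (inv a \<otimes> b = inv c \<otimes> a \<or> inv a \<otimes> b = inv c \<otimes> d)"
proof -
  have "finite A" using A(2) by (intro card_ge_0_finite) simp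
  moreover have "card {inv h \<otimes> h' | h h'. h \<noteq> h' \<and> h \<in> A \<and> h' \<in> A} < card A * (card A - 1)"
    using A(2) S by simp
  ultimately obtain h1 h2 h3 h4 where h: "h1 \<in> A" "h2 \<in> A" "h3 \<in> A" "h4 \<in> A" "h1 \<noteq> h2" "h3 \<noteq> h4"
    and ne: "h1 \<noteq> h3" "h2 \<noteq> h4" and eq: "inv h1 \<otimes> h2 = inv h3 \<otimes> h4"
    using quotient_collision A(1) by blast
  have c: "h1 \<in> carrier G" "h2 \<in> carrier G" "h3 \<in> carrier G" "h4 \<in> carrier G"
    using h A(1) by auto
  have "inv (inv h1 \<otimes> h2) = inv (inv h3 \<otimes> h4)" using eq by (rule arg_cong)
  then have inv_eq: "inv h2 \<otimes> h1 = inv h4 \<otimes> h3"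
    using c by (simp add: inv_mult_group)
  consider (first_eq_last) "h1 = h4" "h2 \<noteq> h3" | (last_eq_first) "h2 = h3" "h1 \<noteq> h4"
    | (disjoint) "h1 \<noteq> h4" "h2 \<noteq> h3"
    using torsion_free_quotient_neq_inverse [OF tf c(1,2) h(5)] eq by blast
  then show ?thesis
  proof cases
    case first_eq_last
    obtain d where "A = {h1, h2, h3, d}" "distinct [h1, h2, h3, d]"
      using card_4_complete [OF A(2), of h1 h2 h3] h first_eq_last ne by auto
    with eq first_eq_last show ?thesis by (intro exI [of _ h1] exI [of _ h2] exI [of _ h3] exI [of _ d]) simp
  next
    case last_eq_first
    obtain d where "A = {h2, h1, h4, d}" "distinct [h2, h1, h4, d]"
      using card_4_complete [OF A(2), of h2 h1 h4] h last_eq_first ne by auto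
    with inv_eq last_eq_first show ?thesis by (intro exI [of _ h2] exI [of _ h1] exI [of _ h4] exI [of _ d]) simp
  next
    case disjoint
    obtain d where "A = {h1, h2, h3, d}" "distinct [h1, h2, h3, d]"
      using card_4_complete [OF A(2), of h1 h2 h3] h disjoint ne by auto
    moreover from this have "h4 = d" using h(4,6) ne disjoint by auto
    ultimately show ?thesis
      using eq by (intro exI [of _ h1] exI [of _ h2] exI [of _ h3] exI [of _ h4]) simp
  qed
qed

lemma translate_quadruple_inverse_form:
  assumes c: "a \<in> carrier G" "b \<in> carrier G" "c \<in> carrier G" "d \<in> carrier G"
    and "distinct [a, b, c, d]" and rel: "inv a \<otimes> b = inv c \<otimes> a"
  shows "\<exists>x\<in>carrier G. \<exists>y\<in>carrier G. x \<noteq> y \<and> x \<noteq> \<one> \<and> y \<noteq> \<one> \<and>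
           (\<lambda>h. inv a \<otimes> h) ` {a, b, c, d} = {\<one>, x, inv x, y}"
proof (intro bexI conjI)
  have "inv (inv a \<otimes> b) = inv a \<otimes> c"
    unfolding rel using c by (simp add: inv_mult_group)
  then show "(\<lambda>h. inv a \<otimes> h) ` {a, b, c, d} = {\<one>, inv a \<otimes> b, inv (inv a \<otimes> b), inv a \<otimes> d}"
    using c by simp
qed (use c assms(5) in auto)

lemma translate_quadruple_product_form:
  assumes c: "a \<in> carrier G" "b \<in> carrier G" "c \<in> carrier G" "d \<in> carrier G"
    and "distinct [a, b, c, d]" and rel: "inv a \<otimes> b = inv c \<otimes> d"
  shows "\<exists>x\<in>carrier G. \<exists>y\<in>carrier G. x \<noteq> y \<and> x \<noteq> \<one> \<and> y \<noteq> \<one> \<and>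
           (\<lambda>h. inv a \<otimes> h) ` {a, b, c, d} = {\<one>, x, y, x \<otimes> y}"
proof (intro bexI conjI)
  have "(inv a \<otimes> c) \<otimes> (inv a \<otimes> b) = inv a \<otimes> d"
    unfolding rel using c by (simp add: m_assoc)
  then show "(\<lambda>h. inv a \<otimes> h) ` {a, b, c, d}
      = {\<one>, inv a \<otimes> c, inv a \<otimes> b, (inv a \<otimes> c) \<otimes> (inv a \<otimes> b)}"
    using c by (simp add: insert_commute)
qed (use c assms(5) in auto)

lemma finitely_supported_invariant_vanishes:
  assumes tf: "torsion_free G" and x: "x \<in> carrier G" "x \<noteq> \<one>"
    and fin: "finite {u \<in> carrier G. F u \<noteq> 0}"
    and inv: "\<And>u. u \<in> carrier G \<Longrightarrow> F (x \<otimes> u) = F u"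
    and u: "u \<in> carrier G"
  shows "F u = 0"
proof (rule ccontr)
  assume "F u \<noteq> 0"
  have orbit: "F (x [^] n \<otimes> u) = F u" for n :: nat
  proof (induction n)
    case (Suc n)
    have "x [^] Suc n \<otimes> u = x \<otimes> (x [^] n \<otimes> u)"
      by (simp only: nat_pow_Suc2 [OF x(1)] m_assoc [OF x(1) nat_pow_closed [OF x(1)] u])
    then show ?case using Suc inv x u by simp
  qed (use u in simp)
  have "inj (\<lambda>n::nat. x [^] n \<otimes> u)"
    using torsion_free_pow_inj [OF tf x] x u by (simp add: inj_def)
  moreover have "range (\<lambda>n::nat. x [^] n \<otimes> u) \<subseteq> {u \<in> carrier G. F u \<noteq> 0}"
    using orbit \<open>F u \<noteq> 0\<close> x u by auto
  ultimately show False
    using fin range_inj_infinite finite_subset by blast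
qed

end

lemma card_2_field_cases:
  assumes "card (UNIV :: 'f::field set) = 2"
  shows "(v :: 'f) = 0 \<or> v = 1"
proof -
  have "finite (UNIV :: 'f set)" using assms by (intro card_ge_0_finite) simp
  then have "{0, 1} = (UNIV :: 'f set)" using assms by (intro card_subset_eq) simp_all
  then show ?thesis by blast
qed

lemma card_2_field_add_eq_0_iff:
  assumes "card (UNIV :: 'f::field set) = 2"
  shows "(v :: 'f) + w = 0 \<longleftrightarrow> w = v"
proof -
  have "(1::'f) + 1 \<noteq> 1 + 0" by (subst add_left_cancel) simp
  then have "(1::'f) + 1 = 0" using card_2_field_cases [OF assms, of "1 + 1"] by simp
  then show ?thesis
    using card_2_field_cases [OF assms, of v] card_2_field_cases [OF assms, of w] by auto
qed

lemma (in group) card_2_field_alternating_vanishes: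
  fixes F :: "'a \<Rightarrow> 'f::field"
  assumes "card (UNIV :: 'f set) = 2" and "torsion_free G" and "x \<in> carrier G" "x \<noteq> \<one>"
    and "finite {u \<in> carrier G. F u \<noteq> 0}"
    and "\<And>u. u \<in> carrier G \<Longrightarrow> F u + F (x \<otimes> u) = 0"
    and "u \<in> carrier G"
  shows "F u = 0"
  using assms by (intro finitely_supported_invariant_vanishes) (simp_all add: card_2_field_add_eq_0_iff)

lemma (in group) card_2_field_parallelogram_annihilator_zero:
  fixes \<alpha> \<beta> :: "'a \<Rightarrow> 'f::field"
  assumes two: "card (UNIV :: 'f set) = 2" and tf: "torsion_free G"
    and \<alpha>: "\<alpha> \<in> grp_ring G" and \<beta>: "\<beta> \<in> grp_ring G" and ab: "gr_mult G \<alpha> \<beta> = (\<lambda>_. 0)"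
    and sa: "supp \<alpha> = {a, b, c, d}" and dist: "distinct [a, b, c, d]"
    and rel: "inv a \<otimes> b = inv c \<otimes> d"
  shows "\<beta> = (\<lambda>_. 0)"
proof -
  have c: "a \<in> carrier G" "b \<in> carrier G" "c \<in> carrier G" "d \<in> carrier G"
    using supp_subset_carrier [OF \<alpha>] sa by auto
  have sb: "supp \<beta> \<subseteq> carrier G" and fin: "finite (supp \<beta>)"
    using \<beta> by (rule supp_subset_carrier, rule finite_supp)
  have one: "\<alpha> h = 1" if "h \<in> {a, b, c, d}" for h
    using that card_2_field_cases [OF two, of "\<alpha> h"] sa unfolding supp_def by blast
  define t where "t = inv a \<otimes> b"
  define s where "s = inv c \<otimes> a"
  have ts: "t \<in> carrier G" "t \<noteq> \<one>" "s \<in> carrier G" "s \<noteq> \<one>"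
    using c dist by (auto simp: t_def s_def)
  have bd: "b = a \<otimes> t" "d = c \<otimes> t"
    using c rel by (simp_all add: t_def inv_solve_left' [symmetric])
  \<comment> \<open>over F_2, alpha factors as (a + c)(1 + t)\<close>
  have sum4: "\<beta> u + \<beta> (inv t \<otimes> u) + (\<beta> (s \<otimes> u) + \<beta> (inv t \<otimes> (s \<otimes> u))) = 0"
    if u: "u \<in> carrier G" for u
  proof -
    have "0 = gr_mult G \<alpha> \<beta> (a \<otimes> u)" using ab by simp
    also have "\<dots> = (\<Sum>h\<in>{a, b, c, d}. \<beta> (inv h \<otimes> (a \<otimes> u)))"
      using gr_mult_apply [OF \<alpha> \<beta>] c u one sa by simp
    also have "\<dots> = \<beta> u + \<beta> (inv t \<otimes> u) + (\<beta> (s \<otimes> u) + \<beta> (inv t \<otimes> (s \<otimes> u)))"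
      using dist c u ts unfolding bd s_def by (simp add: inv_mult_group m_assoc add.assoc)
    finally show ?thesis by simp
  qed
  define F where "F u = \<beta> u + \<beta> (inv t \<otimes> u)" for u
  have "{u \<in> carrier G. F u \<noteq> 0} \<subseteq> supp \<beta> \<union> (\<lambda>v. t \<otimes> v) ` supp \<beta>"
    using ts(1) by (force simp: F_def supp_def intro: rev_image_eqI [of "inv t \<otimes> _"])
  then have finF: "finite {u \<in> carrier G. F u \<noteq> 0}"
    by (rule finite_subset) (use fin in simp)
  have F0: "F u = 0" if "u \<in> carrier G" for u
    by (rule card_2_field_alternating_vanishes [OF two tf ts(3,4) finF _ that])
      (use sum4 in \<open>simp add: F_def\<close>)
  have fin\<beta>: "finite {u \<in> carrier G. \<beta> u \<noteq> 0}"
    by (rule finite_subset [OF _ fin]) (auto simp: supp_def)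
  have "\<beta> u = 0" if "u \<in> carrier G" for u
    by (rule card_2_field_alternating_vanishes [where x = "inv t", OF two tf _ _ fin\<beta> _ that])
      (use ts F0 in \<open>simp_all add: F_def\<close>)
  then show ?thesis using sb by (auto simp: supp_def)
qed

theorem mainTheorem13:
  fixes G :: "('a, 'b) monoid_scheme"
    and \<alpha> \<beta> :: "'a \<Rightarrow> 'f::field"
  assumes "group G"
    and "torsion_free G"
    and "\<alpha> \<in> grp_ring G"
    and "card (supp \<alpha>) = 4"
    and "card (S_set G \<alpha>) = 10"
    and "is_mate G \<alpha> \<beta>"
  shows "((\<exists>x\<in>carrier G. \<exists>y\<in>carrier G. \<exists>\<alpha>'\<in>grp_ring G.
             x \<noteq> y \<and> x \<noteq> \<one>\<^bsub>G\<^esub> \<and> y \<noteq> \<one>\<^bsub>G\<^esub> \<and>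
             supp \<alpha>' = {\<one>\<^bsub>G\<^esub>, x, inv\<^bsub>G\<^esub> x, y} \<and>
             gr_mult G \<alpha>' \<beta> = (\<lambda>_. 0) \<and> Z_iso G \<alpha> \<beta> \<alpha>' \<beta>)
         \<or> (\<exists>x\<in>carrier G. \<exists>y\<in>carrier G. \<exists>\<alpha>'\<in>grp_ring G.
             x \<noteq> y \<and> x \<noteq> \<one>\<^bsub>G\<^esub> \<and> y \<noteq> \<one>\<^bsub>G\<^esub> \<and>
             supp \<alpha>' = {\<one>\<^bsub>G\<^esub>, x, y, x \<otimes>\<^bsub>G\<^esub> y} \<and>
             gr_mult G \<alpha>' \<beta> = (\<lambda>_. 0) \<and> Z_iso G \<alpha> \<beta> \<alpha>' \<beta>))
       \<and> (card (UNIV :: 'f set) = 2 \<longrightarrow>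
           (\<exists>x\<in>carrier G. \<exists>y\<in>carrier G. \<exists>\<alpha>'\<in>grp_ring G.
             x \<noteq> y \<and> x \<noteq> \<one>\<^bsub>G\<^esub> \<and> y \<noteq> \<one>\<^bsub>G\<^esub> \<and>
             supp \<alpha>' = {\<one>\<^bsub>G\<^esub>, x, inv\<^bsub>G\<^esub> x, y} \<and>
             gr_mult G \<alpha>' \<beta> = (\<lambda>_. 0) \<and> Z_iso G \<alpha> \<beta> \<alpha>' \<beta>))"
proof -
  interpret group G by fact
  have \<beta>: "\<beta> \<in> grp_ring G" "\<beta> \<noteq> (\<lambda>_. 0)" and ab: "gr_mult G \<alpha> \<beta> = (\<lambda>_. 0)"
    using assms(6) by (auto simp: is_mate_def)
  have s\<alpha>: "supp \<alpha> \<subseteq> carrier G" using assms(3) by (rule supp_subset_carrier)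
  obtain a b c d where abcd: "supp \<alpha> = {a, b, c, d}" "distinct [a, b, c, d]"
    and rel: "inv\<^bsub>G\<^esub> a \<otimes>\<^bsub>G\<^esub> b = inv\<^bsub>G\<^esub> c \<otimes>\<^bsub>G\<^esub> a \<or> inv\<^bsub>G\<^esub> a \<otimes>\<^bsub>G\<^esub> b = inv\<^bsub>G\<^esub> c \<otimes>\<^bsub>G\<^esub> d"
    using four_element_quotient_relation [OF assms(2) s\<alpha> assms(4)] assms(5)
    unfolding S_set_def by blast
  have c: "a \<in> carrier G" "b \<in> carrier G" "c \<in> carrier G" "d \<in> carrier G"
    using s\<alpha> abcd by auto
  let ?\<alpha>' = "left_translate G a \<alpha>"
  have \<alpha>': "?\<alpha>' \<in> grp_ring G" "supp ?\<alpha>' = (\<lambda>h. inv\<^bsub>G\<^esub> a \<otimes>\<^bsub>G\<^esub> h) ` {a, b, c, d}"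
    "gr_mult G ?\<alpha>' \<beta> = (\<lambda>_. 0)" "Z_iso G \<alpha> \<beta> ?\<alpha>' \<beta>"
    using c(1) assms(3) \<beta>(1) ab s\<alpha> supp_subset_carrier [OF \<beta>(1)]
    by (simp_all add: left_translate_in_grp_ring supp_left_translate abcd(1) [symmetric]
        left_translate_annihilates Z_iso_left_translate)
  show ?thesis
  proof (cases "inv\<^bsub>G\<^esub> a \<otimes>\<^bsub>G\<^esub> b = inv\<^bsub>G\<^esub> c \<otimes>\<^bsub>G\<^esub> a")
    case True
    then show ?thesis
      using translate_quadruple_inverse_form [OF c abcd(2) True] \<alpha>' by metis
  next
    case False
    with rel have par: "inv\<^bsub>G\<^esub> a \<otimes>\<^bsub>G\<^esub> b = inv\<^bsub>G\<^esub> c \<otimes>\<^bsub>G\<^esub> d" by blast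
    then have "card (UNIV :: 'f set) \<noteq> 2"
      using card_2_field_parallelogram_annihilator_zero [OF _ assms(2,3) \<beta>(1) ab abcd] \<beta>(2) by blast
    then show ?thesis
      using translate_quadruple_product_form [OF c abcd(2) par] \<alpha>' by metis
  qed
qed

end
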